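(* Let $q>r\geq 1$ and $N\geq 1$ be integers. Then: (1) $f_{q,r}(N)\geq f_{q-t,r-t}(N)$ and $g_{q,r}(N)\geq g_{q-t,r-t}(N)$ for all integers $0\leq t<r$; (2) $f_{q,r}(N)\geq f_{q/d,r/d}(N)$ and $g_{q,r}(N)\geq g_{q/d,r/d}(N)$ for every positive integer $d$ dividing $\gcd(q,r)$; (3) if $p=\lfloor \frac{q}{q-r}\rfloor\geq 2$, then $f_{q,r}(N)\geq f_{p,p-1}(N)$ and $g_{q,r}(N)\geq g_{p,p-1}(N)$.
   Context: Colors are from $[q]$; path length means number of vertices. For a $q$-edge-colored complete graph $K$ on $[N]$ with its natural order, $f_{q,r}(K)$ is the maximum length of a monotone path (vertices strictly increasing) in $K$ using at most $r$ colors, and $f_{q,r}(N)$ is the minimum of $f_{q,r}(K)$ over all such $K$ on $N$ vertices. For a $q$-edge-colored tournament $T$ (orientation of a complete graph), $g_{q,r}(T)$ is the maximum length of a directed path in $T$ whose edges receive at most $r$ colors, and $g_{q,r}(N)$ is the minimum of $g_{q,r}(T)$ over all $q$-edge-colored $N$-vertex tournaments $T$. *)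

theory Defs
  imports Main
begin

(* Vertex set [N] = {1..N}. An edge {i,j} with i<j of the complete graph gets colour c i j. *)
definition edge_coloring :: "nat \<Rightarrow> nat \<Rightarrow> (nat \<Rightarrow> nat \<Rightarrow> nat) \<Rightarrow> bool" where
  "edge_coloring q N c \<longleftrightarrow> (\<forall>i j. 1 \<le> i \<and> i < j \<and> j \<le> N \<longrightarrow> c i j \<in> {1..q})"

definition path_colors :: "(nat \<Rightarrow> nat \<Rightarrow> nat) \<Rightarrow> nat list \<Rightarrow> nat set" where
  "path_colors c vs = {c (vs ! i) (vs ! Suc i) | i. Suc i < length vs}"

definition monotone_path :: "nat \<Rightarrow> nat list \<Rightarrow> bool" where
  "monotone_path N vs \<longleftrightarrow> vs \<noteq> [] \<and> sorted_wrt (<) vs \<and> set vs \<subseteq> {1..N}"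

(* f_{q,r}(K): longest monotone path (number of vertices) using at most r colours *)
definition fK :: "nat \<Rightarrow> nat \<Rightarrow> (nat \<Rightarrow> nat \<Rightarrow> nat) \<Rightarrow> nat" where
  "fK r N c = Max {length vs | vs. monotone_path N vs \<and> card (path_colors c vs) \<le> r}"

definition f :: "nat \<Rightarrow> nat \<Rightarrow> nat \<Rightarrow> nat" where
  "f q r N = Min {fK r N c | c. edge_coloring q N c}"

(* tournament on {1..N}: T i j means the arc i -> j *)
definition tournament :: "nat \<Rightarrow> (nat \<Rightarrow> nat \<Rightarrow> bool) \<Rightarrow> bool" where
  "tournament N T \<longleftrightarrow> (\<forall>i j. T i j \<longrightarrow> i \<in> {1..N} \<and> j \<in> {1..N}) \<and>
     (\<forall>i\<in>{1..N}. \<not> T i i) \<and>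
     (\<forall>i\<in>{1..N}. \<forall>j\<in>{1..N}. i \<noteq> j \<longrightarrow> (T i j \<longleftrightarrow> \<not> T j i))"

definition arc_coloring :: "nat \<Rightarrow> (nat \<Rightarrow> nat \<Rightarrow> bool) \<Rightarrow> (nat \<Rightarrow> nat \<Rightarrow> nat) \<Rightarrow> bool" where
  "arc_coloring q T c \<longleftrightarrow> (\<forall>i j. T i j \<longrightarrow> c i j \<in> {1..q})"

definition directed_path :: "nat \<Rightarrow> (nat \<Rightarrow> nat \<Rightarrow> bool) \<Rightarrow> nat list \<Rightarrow> bool" where
  "directed_path N T vs \<longleftrightarrow> vs \<noteq> [] \<and> distinct vs \<and> set vs \<subseteq> {1..N} \<and>
     (\<forall>i. Suc i < length vs \<longrightarrow> T (vs ! i) (vs ! Suc i))"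

definition gT :: "nat \<Rightarrow> nat \<Rightarrow> (nat \<Rightarrow> nat \<Rightarrow> bool) \<Rightarrow> (nat \<Rightarrow> nat \<Rightarrow> nat) \<Rightarrow> nat" where
  "gT r N T c = Max {length vs | vs. directed_path N T vs \<and> card (path_colors c vs) \<le> r}"

definition g :: "nat \<Rightarrow> nat \<Rightarrow> nat \<Rightarrow> nat" where
  "g q r N = Min {gT r N T c | T c. tournament N T \<and> arc_coloring q T c}"

end

theory Submission
  imports Defs
begin

(* Merging colours by a map \<phi> from [q] to [q'] turns every q-colouring into a q'-colouring of the
   same ordered complete graph or tournament. If every set of at most r' merged colours has at
   most r preimages, a path using at most r' colours after merging used at most r colours before,
   so f q' r' N \<le> f q r N and g q' r' N \<le> g q r N. Part (1) merges the colours 1, ..., t+1;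
   part (2) merges consecutive blocks of d colours; part (3) merges consecutive blocks of q - r
   colours, the leftover colours joining the last of the p = q div (q - r) blocks: a set of p - 1
   merged colours misses a whole block, so it has at most q - (q - r) = r preimages. This also
   works for p = 1. *)

definition recoloring :: "nat \<Rightarrow> nat \<Rightarrow> nat \<Rightarrow> nat \<Rightarrow> (nat \<Rightarrow> nat) \<Rightarrow> bool" where
  "recoloring q r q' r' \<phi> \<longleftrightarrow> \<phi> ` {1..q} \<subseteq> {1..q'} \<and>
     (\<forall>S. S \<subseteq> {1..q'} \<and> card S \<le> r' \<longrightarrow> card {x \<in> {1..q}. \<phi> x \<in> S} \<le> r)"

lemma recoloring_card_le:
  assumes "recoloring q r q' r' \<phi>" and "A \<subseteq> {1..q}" and "card (\<phi> ` A) \<le> r'"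
  shows "card A \<le> r"
proof -
  have "\<phi> ` A \<subseteq> {1..q'}" using assms(1,2) unfolding recoloring_def by blast
  then have "card {x \<in> {1..q}. \<phi> x \<in> \<phi> ` A} \<le> r"
    using assms(1,3) unfolding recoloring_def by blast
  moreover have "card A \<le> card {x \<in> {1..q}. \<phi> x \<in> \<phi> ` A}"
    using assms(2) by (intro card_mono) auto
  ultimately show ?thesis by linarith
qed

lemma recoloring_shift:
  assumes "t < q" and "t \<le> r"
  shows "recoloring q r (q - t) (r - t) (\<lambda>x. max 1 (x - t))"
  unfolding recoloring_def
proof (intro conjI allI impI)
  show "(\<lambda>x. max 1 (x - t)) ` {1..q} \<subseteq> {1..q - t}" using assms by auto
next
  fix S assume S: "S \<subseteq> {1..q - t} \<and> card S \<le> r - t"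
  have "finite S" using S finite_subset by blast
  have "{x \<in> {1..q}. max 1 (x - t) \<in> S} \<subseteq> {1..t} \<union> (\<lambda>s. s + t) ` S"
    by (force simp: image_iff)
  then have "card {x \<in> {1..q}. max 1 (x - t) \<in> S} \<le> card ({1..t} \<union> (\<lambda>s. s + t) ` S)"
    using \<open>finite S\<close> by (intro card_mono) auto
  also have "\<dots> \<le> card {1..t} + card ((\<lambda>s. s + t) ` S)" by (rule card_Un_le)
  also have "\<dots> \<le> t + card S" using card_image_le[OF \<open>finite S\<close>, of "\<lambda>s. s + t"] by simp
  finally show "card {x \<in> {1..q}. max 1 (x - t) \<in> S} \<le> r" using S assms(2) by linarith
qed

lemma recoloring_div:
  assumes "0 < d" and "d dvd q"
  shows "recoloring q r (q div d) (r div d) (\<lambda>x. (x - 1) div d + 1)"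
  unfolding recoloring_def
proof (intro conjI allI impI)
  have "(x - 1) div d + 1 \<in> {1..q div d}" if "x \<in> {1..q}" for x
  proof -
    have "x - 1 < q div d * d" using that assms(2) by auto
    then have "(x - 1) div d < q div d" by (rule less_mult_imp_div_less)
    then show ?thesis by simp
  qed
  then show "(\<lambda>x. (x - 1) div d + 1) ` {1..q} \<subseteq> {1..q div d}" by blast
next
  fix S assume S: "S \<subseteq> {1..q div d} \<and> card S \<le> r div d"
  have "finite S" using S finite_subset by blast
  let ?block = "\<lambda>(s, k). d * (s - 1) + k + 1"
  have "{x \<in> {1..q}. (x - 1) div d + 1 \<in> S} \<subseteq> ?block ` (S \<times> {0..<d})"
  proof
    fix x assume x: "x \<in> {x \<in> {1..q}. (x - 1) div d + 1 \<in> S}"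
    then have "x = ?block ((x - 1) div d + 1, (x - 1) mod d)" by simp
    moreover have "((x - 1) div d + 1, (x - 1) mod d) \<in> S \<times> {0..<d}" using x assms(1) by simp
    ultimately show "x \<in> ?block ` (S \<times> {0..<d})" by (rule image_eqI)
  qed
  then have "card {x \<in> {1..q}. (x - 1) div d + 1 \<in> S} \<le> card (?block ` (S \<times> {0..<d}))"
    using \<open>finite S\<close> by (intro card_mono) auto
  also have "\<dots> \<le> card S * d"
    using card_image_le[of "S \<times> {0..<d}" ?block] \<open>finite S\<close> by (simp add: card_cartesian_product)
  also have "\<dots> \<le> r" using S by (meson div_times_less_eq_dividend le_trans mult_le_mono1)
  finally show "card {x \<in> {1..q}. (x - 1) div d + 1 \<in> S} \<le> r" .
qed

lemma recoloring_blocks: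
  assumes "0 < m" and "m \<le> q" and "q - m \<le> r"
  shows "recoloring q r (q div m) (q div m - 1) (\<lambda>x. min (q div m) ((x - 1) div m + 1))"
  unfolding recoloring_def
proof (intro conjI allI impI)
  let ?p = "q div m" and ?\<phi> = "\<lambda>x. min (q div m) ((x - 1) div m + 1)"
  have "0 < ?p" using assms(1,2) by (simp add: div_greater_zero_iff)
  then have p1: "1 \<le> ?p" by simp
  show "?\<phi> ` {1..q} \<subseteq> {1..?p}" using p1 by auto
  fix S assume S: "S \<subseteq> {1..?p} \<and> card S \<le> ?p - 1"
  have "\<not> {1..?p} \<subseteq> S"
    using card_mono[OF finite_subset, of "{1..?p}" S "{1..?p}"] S p1 by auto
  then obtain j where j: "j \<in> {1..?p}" "j \<notin> S" by blast
  define B where "B = {(j - 1) * m + 1..j * m}"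
  have jm: "j * m = (j - 1) * m + m" using j by (cases j) auto
  have "j * m \<le> q" using j by (meson atLeastAtMost_iff div_times_less_eq_dividend le_trans mult_le_mono1)
  then have B: "B \<subseteq> {1..q}" unfolding B_def by auto
  have "card B = m" unfolding B_def using jm by simp
  have "?\<phi> x = j" if "x \<in> B" for x
  proof -
    have "(x - 1) div m = j - 1"
      using that jm assms(1) unfolding B_def by (intro div_nat_eqI) (auto simp: mult.commute)
    then show ?thesis using j by auto
  qed
  then have "{x \<in> {1..q}. ?\<phi> x \<in> S} \<subseteq> {1..q} - B" using j by auto
  then have "card {x \<in> {1..q}. ?\<phi> x \<in> S} \<le> card ({1..q} - B)" by (intro card_mono) auto
  also have "\<dots> = q - m" using B \<open>card B = m\<close> by (simp add: card_Diff_subset finite_subset)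
  finally show "card {x \<in> {1..q}. ?\<phi> x \<in> S} \<le> r" using assms(3) by linarith
qed

lemma path_colors_comp: "path_colors (\<lambda>i j. \<phi> (c i j)) vs = \<phi> ` path_colors c vs"
  unfolding path_colors_def by auto

lemma path_colors_singleton: "path_colors c [v] = {}"
  unfolding path_colors_def by auto

lemma monotone_path_colors:
  assumes "edge_coloring q N c" and "monotone_path N vs"
  shows "path_colors c vs \<subseteq> {1..q}"
proof
  fix x assume "x \<in> path_colors c vs"
  then obtain i where x: "x = c (vs ! i) (vs ! Suc i)" and i: "Suc i < length vs"
    unfolding path_colors_def by blast
  have "vs ! i < vs ! Suc i" using assms(2) i unfolding monotone_path_def
    by (simp add: sorted_wrt_nth_less)
  moreover have "vs ! i \<in> set vs" "vs ! Suc i \<in> set vs" using i by simp_all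
  then have "vs ! i \<in> {1..N}" "vs ! Suc i \<in> {1..N}"
    using assms(2) unfolding monotone_path_def by blast+
  ultimately show "x \<in> {1..q}" using assms(1) x unfolding edge_coloring_def by auto
qed

lemma directed_path_colors:
  assumes "arc_coloring q T c" and "directed_path N T vs"
  shows "path_colors c vs \<subseteq> {1..q}"
  using assms unfolding path_colors_def arc_coloring_def directed_path_def by blast

lemma distinct_length_le:
  assumes "distinct vs" and "set vs \<subseteq> {1..N}"
  shows "length vs \<le> N"
  using card_mono[OF _ assms(2)] distinct_card[OF assms(1)] by simp

lemma monotone_path_length_le: "monotone_path N vs \<Longrightarrow> length vs \<le> N"
  using distinct_length_le unfolding monotone_path_def strict_sorted_iff by blast

lemma directed_path_length_le: "directed_path N T vs \<Longrightarrow> length vs \<le> N"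
  using distinct_length_le unfolding directed_path_def by blast

lemma monotone_path_singleton: "1 \<le> N \<Longrightarrow> monotone_path N [N]"
  unfolding monotone_path_def by simp

lemma directed_path_singleton: "1 \<le> N \<Longrightarrow> directed_path N T [N]"
  unfolding directed_path_def by simp

lemma Max_length_le:
  assumes "P vs\<^sub>0" and "\<And>vs. P vs \<Longrightarrow> length vs \<le> n"
  shows "Max {length vs | vs. P vs} \<le> n"
  using assms by (intro Max.boundedI) (auto intro: finite_subset[of _ "{..n}"])

lemma Max_length_mono:
  assumes "\<And>vs. P vs \<Longrightarrow> Q vs" and "P vs\<^sub>0" and "\<And>vs. Q vs \<Longrightarrow> length vs \<le> n"
  shows "Max {length vs | vs. P vs} \<le> Max {length vs | vs. Q vs}"
  using assms by (intro Max_mono) (auto intro: finite_subset[of _ "{..n}"])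

lemma fK_le: "1 \<le> N \<Longrightarrow> fK r N c \<le> N"
  unfolding fK_def
  by (rule Max_length_le[of _ "[N]"])
    (use monotone_path_singleton path_colors_singleton monotone_path_length_le in auto)

lemma gT_le: "1 \<le> N \<Longrightarrow> gT r N T c \<le> N"
  unfolding gT_def
  by (rule Max_length_le[of _ "[N]"])
    (use directed_path_singleton path_colors_singleton directed_path_length_le in auto)

lemma fK_recoloring_le:
  assumes "recoloring q r q' r' \<phi>" and "edge_coloring q N c" and "1 \<le> N"
  shows "fK r' N (\<lambda>i j. \<phi> (c i j)) \<le> fK r N c"
  unfolding fK_def
proof (rule Max_length_mono[of _ _ "[N]" N])
  fix vs assume vs: "monotone_path N vs \<and> card (path_colors (\<lambda>i j. \<phi> (c i j)) vs) \<le> r'"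
  then have "path_colors c vs \<subseteq> {1..q}" using monotone_path_colors[OF assms(2)] by blast
  then have "card (path_colors c vs) \<le> r"
    using recoloring_card_le[OF assms(1)] vs by (simp add: path_colors_comp)
  with vs show "monotone_path N vs \<and> card (path_colors c vs) \<le> r" by blast
qed (use assms(3) monotone_path_singleton path_colors_singleton monotone_path_length_le in auto)

lemma gT_recoloring_le:
  assumes "recoloring q r q' r' \<phi>" and "arc_coloring q T c" and "1 \<le> N"
  shows "gT r' N T (\<lambda>i j. \<phi> (c i j)) \<le> gT r N T c"
  unfolding gT_def
proof (rule Max_length_mono[of _ _ "[N]" N])
  fix vs assume vs: "directed_path N T vs \<and> card (path_colors (\<lambda>i j. \<phi> (c i j)) vs) \<le> r'"
  then have "path_colors c vs \<subseteq> {1..q}" using directed_path_colors[OF assms(2)] by blast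
  then have "card (path_colors c vs) \<le> r"
    using recoloring_card_le[OF assms(1)] vs by (simp add: path_colors_comp)
  with vs show "directed_path N T vs \<and> card (path_colors c vs) \<le> r" by blast
qed (use assms(3) directed_path_singleton path_colors_singleton directed_path_length_le in auto)

lemma f_attained:
  assumes "1 \<le> q" and "1 \<le> N"
  obtains c where "edge_coloring q N c" and "f q r N = fK r N c"
proof -
  let ?F = "{fK r N c | c. edge_coloring q N c}"
  have "edge_coloring q N (\<lambda>_ _. 1)" using assms(1) unfolding edge_coloring_def by auto
  then have "?F \<noteq> {}" by blast
  moreover have "finite ?F" by (rule finite_subset[of _ "{..N}"]) (use fK_le[OF assms(2)] in auto)
  ultimately have "f q r N \<in> ?F" unfolding f_def by (intro Min_in)
  then show ?thesis using that by blast
qed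

lemma f_le_fK:
  assumes "edge_coloring q N c" and "1 \<le> N"
  shows "f q r N \<le> fK r N c"
  unfolding f_def using assms fK_le[OF assms(2)]
  by (intro Min_le) (auto intro: finite_subset[of _ "{..N}"])

lemma g_attained:
  assumes "1 \<le> q" and "1 \<le> N"
  obtains T c where "tournament N T" and "arc_coloring q T c" and "g q r N = gT r N T c"
proof -
  let ?G = "{gT r N T c | T c. tournament N T \<and> arc_coloring q T c}"
  have "tournament N (\<lambda>i j. i \<in> {1..N} \<and> j \<in> {1..N} \<and> i < j)"
    unfolding tournament_def by auto
  moreover have "arc_coloring q T (\<lambda>_ _. 1)" for T
    using assms(1) unfolding arc_coloring_def by auto
  ultimately have "?G \<noteq> {}" by blast
  moreover have "finite ?G" by (rule finite_subset[of _ "{..N}"]) (use gT_le[OF assms(2)] in auto)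
  ultimately have "g q r N \<in> ?G" unfolding g_def by (intro Min_in)
  then show ?thesis using that by blast
qed

lemma g_le_gT:
  assumes "tournament N T" and "arc_coloring q T c" and "1 \<le> N"
  shows "g q r N \<le> gT r N T c"
  unfolding g_def using assms gT_le[OF assms(3)]
  by (intro Min_le) (auto intro: finite_subset[of _ "{..N}"])

lemma f_recoloring_le:
  assumes "recoloring q r q' r' \<phi>" and "1 \<le> q" and "1 \<le> N"
  shows "f q' r' N \<le> f q r N"
proof -
  obtain c where c: "edge_coloring q N c" and fc: "f q r N = fK r N c"
    using f_attained[OF assms(2,3)] .
  have "edge_coloring q' N (\<lambda>i j. \<phi> (c i j))"
    using c assms(1) unfolding edge_coloring_def recoloring_def by blast
  then have "f q' r' N \<le> fK r' N (\<lambda>i j. \<phi> (c i j))" using f_le_fK assms(3) by blast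
  also have "\<dots> \<le> fK r N c" using fK_recoloring_le[OF assms(1) c assms(3)] .
  finally show ?thesis using fc by simp
qed

lemma g_recoloring_le:
  assumes "recoloring q r q' r' \<phi>" and "1 \<le> q" and "1 \<le> N"
  shows "g q' r' N \<le> g q r N"
proof -
  obtain T c where T: "tournament N T" and c: "arc_coloring q T c" and gc: "g q r N = gT r N T c"
    using g_attained[OF assms(2,3)] .
  have "arc_coloring q' T (\<lambda>i j. \<phi> (c i j))"
    using c assms(1) unfolding arc_coloring_def recoloring_def by blast
  then have "g q' r' N \<le> gT r' N T (\<lambda>i j. \<phi> (c i j))" using g_le_gT T assms(3) by blast
  also have "\<dots> \<le> gT r N T c" using gT_recoloring_le[OF assms(1) c assms(3)] .
  finally show ?thesis using gc by simp
qed

theorem lemma3p8: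
  fixes q r N :: nat
  assumes "1 \<le> r" and "r < q" and "1 \<le> N"
  shows "(\<forall>t. t < r \<longrightarrow> f q r N \<ge> f (q - t) (r - t) N \<and> g q r N \<ge> g (q - t) (r - t) N)
       \<and> (\<forall>d. 0 < d \<and> d dvd gcd q r \<longrightarrow>
             f q r N \<ge> f (q div d) (r div d) N \<and> g q r N \<ge> g (q div d) (r div d) N)
       \<and> (q div (q - r) \<ge> 2 \<longrightarrow>
             f q r N \<ge> f (q div (q - r)) (q div (q - r) - 1) N \<and>
             g q r N \<ge> g (q div (q - r)) (q div (q - r) - 1) N)"
proof -
  have q: "1 \<le> q" using assms by simp
  have mono: "f q' r' N \<le> f q r N \<and> g q' r' N \<le> g q r N" if "recoloring q r q' r' \<phi>"
    for q' r' \<phi>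
    using f_recoloring_le[OF that q assms(3)] g_recoloring_le[OF that q assms(3)] by blast
  have shift: "f q r N \<ge> f (q - t) (r - t) N \<and> g q r N \<ge> g (q - t) (r - t) N"
    if "t < r" for t
    using mono[OF recoloring_shift[of t q r]] that assms(2) by simp
  have div: "f q r N \<ge> f (q div d) (r div d) N \<and> g q r N \<ge> g (q div d) (r div d) N"
    if "0 < d" and "d dvd gcd q r" for d
    using mono[OF recoloring_div[of d q r]] that by simp
  have blocks: "f q r N \<ge> f (q div (q - r)) (q div (q - r) - 1) N \<and>
      g q r N \<ge> g (q div (q - r)) (q div (q - r) - 1) N"
    using mono[OF recoloring_blocks[of "q - r" q r]] assms(2) by simp
  show ?thesis using shift div blocks by blast
qed

end
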